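(* Let $G\le \mathrm{Homeo}_+(\mathbb{R})$ and let $U\subseteq\mathbb{R}$ be a $G$-invariant set. Then the restricted action $G|_U$ (on the ordered set $U$) is non-Conradian if and only if there exists a two-chain $\{J_1,J_2\}$ with $(J_1\cup J_2)\cap U\neq\varnothing$ such that for each $i=1,2$, $J_i$ is a connected component of $\operatorname{supp} g_i$ for some $g_i\in G$.
   Context: For $g\in\mathrm{Homeo}_+(\mathbb{R})$, $\operatorname{supp} g=\mathbb{R}\setminus \mathrm{Fix}(g)$. A pair of open intervals $\{J_1,J_2\}$ in $\mathbb{R}$ is a two-chain if $J_1\cap J_2$ is a proper nonempty subinterval of both $J_1$ and $J_2$. For an ordered set $(\Omega,\le)$ and a group $G$ acting by order-preserving bijections of $\Omega$, two elements $f,g\in G$ are crossed if there exist $u<w<v$ in $\Omega$ such that (1) $g^n(u)<w<f^n(v)$ for all $n\in\mathbb{Z}$, and (2) there is $N\in\mathbb{Z}$ with $g^N(v)<w<f^N(u)$. The action is Conradian if there are no crossed elements. *)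

theory Defs
  imports "HOL-Analysis.Analysis"
begin

definition homeo_plus :: "(real \<Rightarrow> real) \<Rightarrow> bool" where
  "homeo_plus g \<longleftrightarrow> homeomorphism UNIV UNIV g (inv g) \<and> strict_mono g"

definition homeo_subgroup :: "(real \<Rightarrow> real) set \<Rightarrow> bool" where
  "homeo_subgroup G \<longleftrightarrow> (\<forall>g\<in>G. homeo_plus g) \<and> id \<in> G \<and>
     (\<forall>f\<in>G. \<forall>g\<in>G. f \<circ> g \<in> G) \<and> (\<forall>g\<in>G. inv g \<in> G)"

definition ipow :: "(real \<Rightarrow> real) \<Rightarrow> int \<Rightarrow> (real \<Rightarrow> real)" where
  "ipow g n = (if 0 \<le> n then g ^^ nat n else (inv g) ^^ nat (- n))"

definition supp :: "(real \<Rightarrow> real) \<Rightarrow> real set" where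
  "supp g = {x. g x \<noteq> x}"

definition G_invariant :: "(real \<Rightarrow> real) set \<Rightarrow> real set \<Rightarrow> bool" where
  "G_invariant G U \<longleftrightarrow> (\<forall>g\<in>G. g ` U = U)"

definition open_interval :: "real set \<Rightarrow> bool" where
  "open_interval J \<longleftrightarrow> open J \<and> is_interval J \<and> J \<noteq> {}"

definition two_chain :: "real set \<Rightarrow> real set \<Rightarrow> bool" where
  "two_chain J1 J2 \<longleftrightarrow> open_interval J1 \<and> open_interval J2 \<and>
     J1 \<inter> J2 \<noteq> {} \<and> J1 \<inter> J2 \<subset> J1 \<and> J1 \<inter> J2 \<subset> J2"

definition crossed_on :: "real set \<Rightarrow> (real \<Rightarrow> real) \<Rightarrow> (real \<Rightarrow> real) \<Rightarrow> bool" where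
  "crossed_on U f g \<longleftrightarrow> (\<exists>u\<in>U. \<exists>w\<in>U. \<exists>v\<in>U. u < w \<and> w < v \<and>
     (\<forall>n::int. ipow g n u < w \<and> w < ipow f n v) \<and>
     (\<exists>N::int. ipow g N v < w \<and> w < ipow f N u))"

definition conradian_on :: "(real \<Rightarrow> real) set \<Rightarrow> real set \<Rightarrow> bool" where
  "conradian_on G U \<longleftrightarrow> \<not> (\<exists>f\<in>G. \<exists>g\<in>G. crossed_on U f g)"

end

theory Submission
  imports Defs
begin

text \<open>
  The basic dynamical fact is that the orbit of a point x under h is unbounded in both directions
  inside the component of supp h containing x: otherwise its supremum or infimum would be a fixed
  point of h inside that component.

  If f, g are crossed, witnessed by u < w < v, then condition (2) puts u into the component J1 of
  supp f at w and v into the component J2 of supp g at w, while by the basic fact condition (1)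
  keeps u out of J2 and v out of J1; so {J1, J2} is a two-chain meeting U in w.

  Conversely, moving a point of U along an orbit of g1 or g2 gives w \<in> U \<inter> J1 \<inter> J2, and we may
  assume that J1 extends to the left of J2 beyond some x1 and J2 to the right of J1 beyond some x2.
  Suitable powers f of g1 and g of g2 then send a point u of the g1-orbit of w, left of x1, beyond
  w, and a point v of the g2-orbit of w, right of x2, below w. All g-images of u stay left of a
  fixed point of g2 in [x1, w], and all f-images of v stay right of a fixed point of g1 in [w, x2],
  so f and g are crossed with N = 1.
\<close>

lemma homeo_plusD:
  assumes "homeo_plus h"
  shows "inj h" "surj h" "continuous_on UNIV h" "strict_mono h" "strict_mono (inv h)"
proof -
  have hom: "homeomorphism UNIV UNIV h (inv h)" and mono: "strict_mono h"
    using assms unfolding homeo_plus_def by auto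
  then have cancel: "\<And>y. h (inv h y) = y" "\<And>x. inv h (h x) = x"
    unfolding homeomorphism_def by auto
  show "surj h" using cancel(1) by (rule surjI)
  show "inj h" using cancel(2) by (rule inj_on_inverseI)
  show "continuous_on UNIV h" using hom unfolding homeomorphism_def by simp
  show "strict_mono h" by (rule mono)
  show "strict_mono (inv h)" using strict_mono_inv[OF mono surjI cancel(2)] cancel(1) .
qed

lemma homeo_subgroup_homeo_plus: "homeo_subgroup G \<Longrightarrow> g \<in> G \<Longrightarrow> homeo_plus g"
  unfolding homeo_subgroup_def by blast

lemma strict_mono_funpow: "strict_mono (f :: 'a::order \<Rightarrow> 'a) \<Longrightarrow> strict_mono (f ^^ k)"
  by (induction k) (simp_all add: strict_mono_o strict_mono_def)

lemma strict_mono_ipow: "homeo_plus h \<Longrightarrow> strict_mono (ipow h n)"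
  unfolding ipow_def using homeo_plusD(4,5) strict_mono_funpow by auto

lemma ipow_fixed:
  assumes "inj h" and "h x = x"
  shows "ipow h n x = x"
proof -
  have "inv h x = x" using assms by (metis inv_f_f)
  then have "((inv h) ^^ k) x = x" "(h ^^ k) x = x" for k
    using assms(2) by (induction k) simp_all
  then show ?thesis unfolding ipow_def by simp
qed

lemma ipow_0: "ipow h 0 = id"
  by (simp add: ipow_def)

lemma ipow_succ:
  assumes "surj h"
  shows "h (ipow h n x) = ipow h (n + 1) x"
proof (cases "0 \<le> n")
  case True
  then show ?thesis by (simp add: ipow_def nat_add_distrib)
next
  case False
  then have "nat (- n) = Suc (nat (- (n + 1)))" by simp
  then show ?thesis using False assms by (auto simp: ipow_def surj_f_inv_f)
qed

lemma image_orbit: "surj h \<Longrightarrow> h ` range (\<lambda>n. ipow h n x) = range (\<lambda>n. ipow h n x)"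
  by (auto simp: ipow_succ image_iff) (metis ipow_succ diff_add_cancel)

lemma ipow_in_subgroup:
  assumes G: "homeo_subgroup G" and g: "g \<in> G"
  shows "ipow g n \<in> G"
proof -
  have "f ^^ k \<in> G" if "f \<in> G" for f k
    using G that by (induction k) (auto simp: homeo_subgroup_def id_def)
  then show ?thesis using G g unfolding ipow_def homeo_subgroup_def by simp
qed

lemma ipow_in_invariant:
  "homeo_subgroup G \<Longrightarrow> G_invariant G U \<Longrightarrow> g \<in> G \<Longrightarrow> x \<in> U \<Longrightarrow> ipow g n x \<in> U"
  using ipow_in_subgroup unfolding G_invariant_def by blast

lemma ipow_le_fixed: "homeo_plus h \<Longrightarrow> h p = p \<Longrightarrow> x \<le> p \<Longrightarrow> ipow h n x \<le> p"
  by (metis homeo_plusD(1) ipow_fixed strict_mono_ipow strict_mono_less_eq)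

lemma fixed_le_ipow: "homeo_plus h \<Longrightarrow> h p = p \<Longrightarrow> p \<le> x \<Longrightarrow> p \<le> ipow h n x"
  by (metis homeo_plusD(1) ipow_fixed strict_mono_ipow strict_mono_less_eq)

lemma is_interval_component_supp: "is_interval (connected_component_set (supp h) x)"
  using is_interval_connected_1 connected_connected_component by blast

lemma open_interval_component_supp:
  assumes "homeo_plus h" and "x \<in> supp h"
  shows "open_interval (connected_component_set (supp h) x)"
proof -
  have "open (supp h)"
    unfolding supp_def using homeo_plusD(3)[OF assms(1)] by (intro open_Collect_neq) auto
  then show ?thesis
    unfolding open_interval_def
    using assms(2) open_connected_component is_interval_component_supp
      connected_component_eq_empty by blast
qed

lemma fixed_point_between:
  assumes "x \<notin> connected_component_set (supp h) w"
  obtains p where "min x w \<le> p" "p \<le> max x w" "h p = p"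
proof (rule ccontr)
  assume "\<not> thesis"
  with that have "{min x w .. max x w} \<subseteq> supp h" unfolding supp_def by fastforce
  then have "{min x w .. max x w} \<subseteq> connected_component_set (supp h) w"
    by (intro connected_component_maximal) auto
  with assms show False by (meson atLeastAtMost_iff max.cobounded1 min.cobounded1 subsetD)
qed

lemma ipow_in_component:
  assumes h: "homeo_plus h" and x: "x \<in> supp h"
  shows "ipow h n x \<in> connected_component_set (supp h) x"
proof (rule ccontr)
  assume "ipow h n x \<notin> connected_component_set (supp h) x"
  then obtain p where p: "min (ipow h n x) x \<le> p" "p \<le> max (ipow h n x) x" "h p = p"
    by (rule fixed_point_between)
  then have "p \<noteq> x" "ipow h n p = p"
    using x ipow_fixed[OF homeo_plusD(1)[OF h]] unfolding supp_def by auto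
  then show False
    using p strict_monoD[OF strict_mono_ipow[OF h], of x p n]
      strict_monoD[OF strict_mono_ipow[OF h], of p x n]
    by (cases "x < p") auto
qed

lemma fixed_Sup_of_invariant:
  fixes A :: "real set"
  assumes h: "homeo_plus h" and A: "h ` A = A" "A \<noteq> {}" "bdd_above A"
  shows "h (Sup A) = Sup A"
proof -
  have "continuous (at_left (Sup A)) h"
    using homeo_plusD(3)[OF h] continuous_on_eq_continuous_at
      continuous_at_imp_continuous_at_within by blast
  then show ?thesis
    using continuous_at_Sup_mono[OF strict_mono_mono[OF homeo_plusD(4)[OF h]]] A by simp
qed

lemma fixed_Inf_of_invariant:
  fixes A :: "real set"
  assumes h: "homeo_plus h" and A: "h ` A = A" "A \<noteq> {}" "bdd_below A"
  shows "h (Inf A) = Inf A"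
proof -
  have "continuous (at_right (Inf A)) h"
    using homeo_plusD(3)[OF h] continuous_on_eq_continuous_at
      continuous_at_imp_continuous_at_within by blast
  then show ?thesis
    using continuous_at_Inf_mono[OF strict_mono_mono[OF homeo_plusD(4)[OF h]]] A by simp
qed

lemma orbit_unbounded_above:
  assumes h: "homeo_plus h" and y: "y \<in> connected_component_set (supp h) x"
  obtains n where "y < ipow h n x"
proof (rule ccontr)
  assume "\<not> thesis"
  then have le: "ipow h n x \<le> y" for n using that not_less by metis
  define A where "A = range (\<lambda>n. ipow h n x)"
  have "x \<in> A" unfolding A_def using ipow_0 by (metis id_apply rangeI)
  have bdd: "bdd_above A" unfolding A_def using le by (intro bdd_aboveI[of _ y]) auto
  have "x \<le> Sup A" using cSup_upper[OF \<open>x \<in> A\<close> bdd] .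
  moreover have "Sup A \<le> y" unfolding A_def using le by (intro cSup_least) auto
  moreover have "x \<in> connected_component_set (supp h) x"
    using y connected_component_eq_empty by auto
  ultimately have "Sup A \<in> connected_component_set (supp h) x"
    using y is_interval_component_supp[of h x] unfolding is_interval_1 by blast
  then have "Sup A \<in> supp h" using connected_component_subset by blast
  moreover have "h (Sup A) = Sup A"
    using fixed_Sup_of_invariant[OF h _ _ bdd] image_orbit[OF homeo_plusD(2)[OF h]] \<open>x \<in> A\<close>
    unfolding A_def by blast
  ultimately show False unfolding supp_def by simp
qed

lemma orbit_unbounded_below:
  assumes h: "homeo_plus h" and y: "y \<in> connected_component_set (supp h) x"
  obtains n where "ipow h n x < y"
proof (rule ccontr)
  assume "\<not> thesis"
  then have ge: "y \<le> ipow h n x" for n using that not_less by metis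
  define A where "A = range (\<lambda>n. ipow h n x)"
  have "x \<in> A" unfolding A_def using ipow_0 by (metis id_apply rangeI)
  have bdd: "bdd_below A" unfolding A_def using ge by (intro bdd_belowI[of _ y]) auto
  have "Inf A \<le> x" using cInf_lower[OF \<open>x \<in> A\<close> bdd] .
  moreover have "y \<le> Inf A" unfolding A_def using ge by (intro cInf_greatest) auto
  moreover have "x \<in> connected_component_set (supp h) x"
    using y connected_component_eq_empty by auto
  ultimately have "Inf A \<in> connected_component_set (supp h) x"
    using y is_interval_component_supp[of h x] unfolding is_interval_1 by blast
  then have "Inf A \<in> supp h" using connected_component_subset by blast
  moreover have "h (Inf A) = Inf A"
    using fixed_Inf_of_invariant[OF h _ _ bdd] image_orbit[OF homeo_plusD(2)[OF h]] \<open>x \<in> A\<close>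
    unfolding A_def by blast
  ultimately show False unfolding supp_def by simp
qed

lemma orbit_meets_interval:
  assumes h: "homeo_plus h" and K: "is_interval K"
    and y: "y \<in> K" "y \<in> connected_component_set (supp h) x"
    and z: "z \<in> K" "z \<notin> connected_component_set (supp h) x"
  obtains n where "ipow h n x \<in> K"
proof -
  let ?J = "connected_component_set (supp h) x"
  have x: "x \<in> supp h" using y(2) connected_component_eq_empty by blast
  have J: "a \<le> c \<Longrightarrow> c \<le> b \<Longrightarrow> a \<in> ?J \<Longrightarrow> b \<in> ?J \<Longrightarrow> c \<in> ?J" for a c b
    using is_interval_component_supp[of h x] unfolding is_interval_1 by blast
  have K': "a \<le> c \<Longrightarrow> c \<le> b \<Longrightarrow> a \<in> K \<Longrightarrow> b \<in> K \<Longrightarrow> c \<in> K" for a c b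
    using K unfolding is_interval_1 by blast
  have "y \<noteq> z" using y z by blast
  then consider "y < z" | "z < y" by linarith
  then show thesis
  proof cases
    case 1
    obtain n where n: "y < ipow h n x" using orbit_unbounded_above[OF h y(2)] .
    then have "ipow h n x < z"
      using J[of y z "ipow h n x"] ipow_in_component[OF h x] y z 1 by (meson less_imp_le not_le)
    then show thesis using that K'[of y "ipow h n x" z] n y z by simp
  next
    case 2
    obtain n where n: "ipow h n x < y" using orbit_unbounded_below[OF h y(2)] .
    then have "z < ipow h n x"
      using J[of "ipow h n x" z y] ipow_in_component[OF h x] y z 2 by (meson less_imp_le not_le)
    then show thesis using that K'[of z "ipow h n x" y] n y z by simp
  qed
qed

lemma between_of_overlapping_intervals:
  fixes a b c :: real
  assumes "is_interval I" "is_interval J"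
    and "a \<in> I" "a \<notin> J" "b \<in> I" "b \<in> J" "c \<in> J" "c \<notin> I"
  shows "a < b \<and> b < c \<or> c < b \<and> b < a"
  using assms unfolding is_interval_1 by (smt (verit))

lemma two_chain_of_crossed:
  assumes G: "homeo_subgroup G" and fG: "f \<in> G" and gG: "g \<in> G" and cr: "crossed_on U f g"
  obtains w where "w \<in> U" "w \<in> supp f" "w \<in> supp g"
    "two_chain (connected_component_set (supp f) w) (connected_component_set (supp g) w)"
proof -
  have f: "homeo_plus f" and g: "homeo_plus g"
    using G fG gG homeo_subgroup_homeo_plus by auto
  obtain u w v N where "w \<in> U" and uw: "u < w" and wv: "w < v"
    and orbits: "\<And>n. ipow g n u < w \<and> w < ipow f n v"
    and N: "ipow g N v < w" "w < ipow f N u"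
    using cr unfolding crossed_on_def by blast
  let ?J1 = "connected_component_set (supp f) w" and ?J2 = "connected_component_set (supp g) w"
  have uJ1: "u \<in> ?J1"
  proof (rule ccontr)
    assume "u \<notin> ?J1"
    then obtain p where "min u w \<le> p" "p \<le> max u w" "f p = p" by (rule fixed_point_between)
    then show False using ipow_le_fixed[OF f, of p u N] N(2) uw by simp
  qed
  have vJ2: "v \<in> ?J2"
  proof (rule ccontr)
    assume "v \<notin> ?J2"
    then obtain p where "min v w \<le> p" "p \<le> max v w" "g p = p" by (rule fixed_point_between)
    then show False using fixed_le_ipow[OF g, of p v N] N(1) wv by simp
  qed
  have wf: "w \<in> supp f" and wg: "w \<in> supp g"
    using uJ1 vJ2 connected_component_eq_empty by blast+
  have uJ2: "u \<notin> ?J2"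
  proof
    assume "u \<in> ?J2"
    then have "w \<in> connected_component_set (supp g) u"
      using wg connected_component_eq by fastforce
    then obtain n where "w < ipow g n u" by (rule orbit_unbounded_above[OF g])
    then show False using orbits[of n] by simp
  qed
  have vJ1: "v \<notin> ?J1"
  proof
    assume "v \<in> ?J1"
    then have "w \<in> connected_component_set (supp f) v"
      using wf connected_component_eq by fastforce
    then obtain n where "ipow f n v < w" by (rule orbit_unbounded_below[OF f])
    then show False using orbits[of n] by simp
  qed
  have "w \<in> ?J1" "w \<in> ?J2" using wf wg by simp_all
  then have "two_chain ?J1 ?J2"
    unfolding two_chain_def
    using open_interval_component_supp[OF f wf] open_interval_component_supp[OF g wg]
      uJ1 uJ2 vJ1 vJ2 by blast
  with that \<open>w \<in> U\<close> wf wg show thesis by blast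
qed

lemma crossed_of_overlapping_components:
  assumes G: "homeo_subgroup G" and GU: "G_invariant G U" and g1G: "g1 \<in> G" and g2G: "g2 \<in> G"
    and "w \<in> U"
    and x1: "x1 \<in> connected_component_set (supp g1) w" "x1 \<notin> connected_component_set (supp g2) w"
    and x2: "x2 \<in> connected_component_set (supp g2) w" "x2 \<notin> connected_component_set (supp g1) w"
    and "x1 < w" "w < x2"
  shows "\<exists>f\<in>G. \<exists>g\<in>G. crossed_on U f g"
proof -
  have h1: "homeo_plus g1" and h2: "homeo_plus g2"
    using G g1G g2G homeo_subgroup_homeo_plus by auto
  have w1: "w \<in> supp g1" and w2: "w \<in> supp g2"
    using x1(1) x2(1) connected_component_eq_empty by blast+
  obtain a where ux1: "ipow g1 a w < x1" using orbit_unbounded_below[OF h1 x1(1)] .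
  define u where "u = ipow g1 a w"
  have "w \<in> connected_component_set (supp g1) u"
    using ipow_in_component[OF h1 w1] connected_component_sym unfolding u_def by blast
  then obtain b where fu: "w < ipow g1 b u" by (rule orbit_unbounded_above[OF h1])
  obtain c where x2v: "x2 < ipow g2 c w" using orbit_unbounded_above[OF h2 x2(1)] .
  define v where "v = ipow g2 c w"
  have "w \<in> connected_component_set (supp g2) v"
    using ipow_in_component[OF h2 w2] connected_component_sym unfolding v_def by blast
  then obtain d where gv: "ipow g2 d v < w" by (rule orbit_unbounded_below[OF h2])
  define f where "f = ipow g1 b"
  define g where "g = ipow g2 d"
  have fG: "f \<in> G" and gG: "g \<in> G" unfolding f_def g_def using ipow_in_subgroup G g1G g2G by auto
  have f: "homeo_plus f" and g: "homeo_plus g" using G fG gG homeo_subgroup_homeo_plus by auto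
  obtain p where p: "min x1 w \<le> p" "p \<le> max x1 w" "g2 p = p"
    using x1(2) by (rule fixed_point_between)
  have "p \<noteq> w" using p(3) w2 unfolding supp_def by auto
  have "g p = p" unfolding g_def using ipow_fixed[OF homeo_plusD(1)[OF h2] p(3)] .
  then have g_orbit: "ipow g n u < w" for n
    using ipow_le_fixed[OF g, of p u n] p \<open>p \<noteq> w\<close> ux1 \<open>x1 < w\<close> unfolding u_def by simp
  obtain q where q: "min x2 w \<le> q" "q \<le> max x2 w" "g1 q = q"
    using x2(2) by (rule fixed_point_between)
  have "q \<noteq> w" using q(3) w1 unfolding supp_def by auto
  have "f q = q" unfolding f_def using ipow_fixed[OF homeo_plusD(1)[OF h1] q(3)] .
  then have f_orbit: "w < ipow f n v" for n
    using fixed_le_ipow[OF f, of q v n] q \<open>q \<noteq> w\<close> x2v \<open>w < x2\<close> unfolding v_def by simp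
  have "crossed_on U f g"
    unfolding crossed_on_def
  proof (intro bexI conjI allI exI)
    show "u < w" "w < v" using ux1 x2v \<open>x1 < w\<close> \<open>w < x2\<close> unfolding u_def v_def by simp_all
    show "ipow g n u < w" "w < ipow f n v" for n using g_orbit f_orbit .
    show "ipow g 1 v < w" "w < ipow f 1 u" using gv fu by (simp_all add: ipow_def f_def g_def)
    show "u \<in> U" "v \<in> U"
      using ipow_in_invariant[OF G GU] g1G g2G \<open>w \<in> U\<close> unfolding u_def v_def by blast+
  qed fact
  with fG gG show ?thesis by blast
qed

lemma invariant_point_in_two_chain:
  assumes G: "homeo_subgroup G" and GU: "G_invariant G U"
    and chain: "two_chain J1 J2" and meets: "(J1 \<union> J2) \<inter> U \<noteq> {}"
    and "g1 \<in> G" "J1 = connected_component_set (supp g1) z1"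
    and "g2 \<in> G" "J2 = connected_component_set (supp g2) z2"
  obtains w where "w \<in> U" "w \<in> J1" "w \<in> J2"
proof -
  have overlap: "\<exists>w\<in>U. w \<in> J \<and> w \<in> K"
    if g: "g \<in> G" and J: "J = connected_component_set (supp g) z" and p: "p \<in> U" "p \<in> J"
      and K: "is_interval K" and y: "y \<in> J" "y \<in> K" and x: "x \<in> K" "x \<notin> J"
    for g z p J K x y
  proof -
    have J': "J = connected_component_set (supp g) p"
      using J p(2) connected_component_eq by blast
    have h: "homeo_plus g" using G g homeo_subgroup_homeo_plus by blast
    obtain n where "ipow g n p \<in> K"
      using orbit_meets_interval[OF h K] x y J' by blast
    moreover have "ipow g n p \<in> J"
      using ipow_in_component[OF h] p(2) J' connected_component_eq_empty by blast
    moreover have "ipow g n p \<in> U" using ipow_in_invariant[OF G GU g p(1)] .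
    ultimately show ?thesis by blast
  qed
  have "is_interval J1" "is_interval J2" using chain unfolding two_chain_def open_interval_def by auto
  moreover obtain y where "y \<in> J1" "y \<in> J2" using chain unfolding two_chain_def by blast
  moreover obtain x1 x2 where "x1 \<in> J1" "x1 \<notin> J2" "x2 \<in> J2" "x2 \<notin> J1"
    using chain unfolding two_chain_def by blast
  moreover obtain p where "p \<in> U" "p \<in> J1 \<or> p \<in> J2" using meets by blast
  ultimately show thesis
    using overlap[OF assms(5,6)] overlap[OF assms(7,8)] that by blast
qed

theorem lemma2p5:
  fixes G :: "(real \<Rightarrow> real) set" and U :: "real set"
  assumes "homeo_subgroup G" and "G_invariant G U"
  shows "\<not> conradian_on G U \<longleftrightarrow>
    (\<exists>J1 J2. two_chain J1 J2 \<and> (J1 \<union> J2) \<inter> U \<noteq> {} \<and>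
      (\<exists>g1\<in>G. \<exists>x\<in>supp g1. J1 = connected_component_set (supp g1) x) \<and>
      (\<exists>g2\<in>G. \<exists>x\<in>supp g2. J2 = connected_component_set (supp g2) x))"
    (is "_ \<longleftrightarrow> ?two_chain")
proof
  assume "\<not> conradian_on G U"
  then obtain f g where "f \<in> G" "g \<in> G" "crossed_on U f g" unfolding conradian_on_def by blast
  then obtain w where "w \<in> U" "w \<in> supp f" "w \<in> supp g"
    "two_chain (connected_component_set (supp f) w) (connected_component_set (supp g) w)"
    using two_chain_of_crossed[OF assms(1)] by metis
  moreover have "w \<in> connected_component_set (supp f) w" using \<open>w \<in> supp f\<close> by simp
  ultimately show ?two_chain using \<open>f \<in> G\<close> \<open>g \<in> G\<close> by blast
next
  assume ?two_chain
  then obtain J1 J2 g1 g2 z1 z2 where chain: "two_chain J1 J2" "(J1 \<union> J2) \<inter> U \<noteq> {}"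
    and g1: "g1 \<in> G" "J1 = connected_component_set (supp g1) z1"
    and g2: "g2 \<in> G" "J2 = connected_component_set (supp g2) z2"
    by blast
  obtain w where w: "w \<in> U" "w \<in> J1" "w \<in> J2"
    using invariant_point_in_two_chain[OF assms chain g1 g2] .
  have J1: "J1 = connected_component_set (supp g1) w"
    and J2: "J2 = connected_component_set (supp g2) w"
    using w g1(2) g2(2) connected_component_eq by blast+
  obtain x1 x2 where x: "x1 \<in> J1" "x1 \<notin> J2" "x2 \<in> J2" "x2 \<notin> J1"
    using chain(1) unfolding two_chain_def by blast
  have "is_interval J1" "is_interval J2" using chain(1) unfolding two_chain_def open_interval_def by auto
  then have "x1 < w \<and> w < x2 \<or> x2 < w \<and> w < x1"
    using between_of_overlapping_intervals x w(2,3) by blast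
  then show "\<not> conradian_on G U"
    using crossed_of_overlapping_components[OF assms g1(1) g2(1) w(1) x[unfolded J1 J2]]
      crossed_of_overlapping_components[OF assms g2(1) g1(1) w(1) x(3,4,1,2)[unfolded J1 J2]]
    unfolding conradian_on_def by blast
qed

end
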